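(* Let $A=[a_{ij}],B=[b_{ij}]\in\mathbb{R}_+^{m\times n}$ be a WN-pair such that $a_{ij}>0$ whenever $b_{ij}=0$. Then the pair $(A,B)$ is $S$-irreducible.
   Context: $[m]=\{1,\dots,m\}$. For $F\in\mathbb{R}^{m\times n}$, $R\subseteq[m]$, $K\subseteq[n]$, $F[R,K]$ is the submatrix with rows in $R$ and columns in $K$. A pair $A,B\in\mathbb{R}_+^{m\times n}$ is a WN-pair if $n\ge m$, $B$ has no zero row, and each column of $B$ has exactly one positive entry. A square nonnegative matrix is monomial if each row and each column has exactly one positive entry; it is irreducible if the digraph with an edge $i\to j$ iff the $(i,j)$ entry is positive is strongly connected. A WN-pair is $S$-irreducible if for every $K\subseteq[n]$ with $|K|=m$ such that $B[[m],K]$ is monomial, the matrix $B[[m],K]^{-1}A[[m],K]$ is irreducible. *)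

theory Defs
  imports Complex_Main
begin

text \<open>Matrices are functions nat \<Rightarrow> nat \<Rightarrow> real; an m\<times>n matrix uses
  row indices {1..m} and column indices {1..n}. Submatrices are kept with their
  original row/column index sets (R and K).\<close>

definition nonneg_mat :: "nat \<Rightarrow> nat \<Rightarrow> (nat \<Rightarrow> nat \<Rightarrow> real) \<Rightarrow> bool" where
  "nonneg_mat m n A \<longleftrightarrow> (\<forall>i\<in>{1..m}. \<forall>j\<in>{1..n}. 0 \<le> A i j)"

definition WN_pair :: "nat \<Rightarrow> nat \<Rightarrow> (nat \<Rightarrow> nat \<Rightarrow> real) \<Rightarrow> (nat \<Rightarrow> nat \<Rightarrow> real) \<Rightarrow> bool" where
  "WN_pair m n A B \<longleftrightarrow>
     nonneg_mat m n A \<and> nonneg_mat m n B \<and> m \<le> n \<and>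
     (\<forall>i\<in>{1..m}. \<exists>j\<in>{1..n}. B i j \<noteq> 0) \<and>
     (\<forall>j\<in>{1..n}. \<exists>!i. i \<in> {1..m} \<and> 0 < B i j)"

definition monomial_on :: "nat set \<Rightarrow> nat set \<Rightarrow> (nat \<Rightarrow> nat \<Rightarrow> real) \<Rightarrow> bool" where
  "monomial_on R K M \<longleftrightarrow>
     (\<forall>i\<in>R. \<exists>!j. j \<in> K \<and> 0 < M i j) \<and> (\<forall>j\<in>K. \<exists>!i. i \<in> R \<and> 0 < M i j)"

definition is_inverse_on :: "nat set \<Rightarrow> nat set \<Rightarrow> (nat \<Rightarrow> nat \<Rightarrow> real) \<Rightarrow> (nat \<Rightarrow> nat \<Rightarrow> real) \<Rightarrow> bool" where
  "is_inverse_on R K M C \<longleftrightarrow>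
     (\<forall>k\<in>K. \<forall>l\<in>K. (\<Sum>i\<in>R. C k i * M i l) = (if k = l then 1 else 0)) \<and>
     (\<forall>i\<in>R. \<forall>i'\<in>R. (\<Sum>k\<in>K. M i k * C k i') = (if i = i' then 1 else 0))"

definition irreducible_on :: "nat set \<Rightarrow> (nat \<Rightarrow> nat \<Rightarrow> real) \<Rightarrow> bool" where
  "irreducible_on K M \<longleftrightarrow>
     (\<forall>k\<in>K. \<forall>l\<in>K. (k, l) \<in> {(p, q). p \<in> K \<and> q \<in> K \<and> 0 < M p q}\<^sup>*)"

definition S_irreducible :: "nat \<Rightarrow> nat \<Rightarrow> (nat \<Rightarrow> nat \<Rightarrow> real) \<Rightarrow> (nat \<Rightarrow> nat \<Rightarrow> real) \<Rightarrow> bool" where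
  "S_irreducible m n A B \<longleftrightarrow>
     (\<forall>K. K \<subseteq> {1..n} \<and> card K = m \<and> monomial_on {1..m} K B \<longrightarrow>
        (\<forall>C. is_inverse_on {1..m} K B C \<longrightarrow>
           irreducible_on K (\<lambda>k l. \<Sum>i\<in>{1..m}. C k i * A i l)))"

end

theory Submission
  imports Defs
begin

text \<open>If \<open>B[[m],K]\<close> is monomial, each \<open>k \<in> K\<close> has its positive entry in a unique row \<open>i\<close>,
  and row \<open>i\<close> vanishes on \<open>K - {k}\<close>. Hence row \<open>k\<close> of \<open>B[[m],K]\<^sup>-\<^sup>1\<close> is the \<open>i\<close>-th unit
  vector divided by \<open>b\<^sub>i\<^sub>k\<close>, and the \<open>(k,l)\<close> entry of \<open>B[[m],K]\<^sup>-\<^sup>1 A[[m],K]\<close> is \<open>a\<^sub>i\<^sub>l / b\<^sub>i\<^sub>k\<close>.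
  For \<open>l \<noteq> k\<close> we have \<open>b\<^sub>i\<^sub>l = 0\<close>, so \<open>a\<^sub>i\<^sub>l > 0\<close>: all off-diagonal entries are positive, and a
  matrix with positive off-diagonal entries is irreducible.\<close>

lemma monomial_on_row_zero_elsewhere:
  assumes "monomial_on R K M" and "\<forall>i\<in>R. \<forall>j\<in>K. 0 \<le> M i j"
    and "i \<in> R" "k \<in> K" "0 < M i k" "j \<in> K" "j \<noteq> k"
  shows "M i j = 0"
proof -
  have "\<exists>!j. j \<in> K \<and> 0 < M i j"
    using assms(1,3) unfolding monomial_on_def by blast
  then have "\<not> 0 < M i j"
    using assms(4-7) by blast
  then show ?thesis
    using assms(2,3,6) by force
qed

lemma inverse_on_row_of_unit_row:
  assumes "is_inverse_on R K M C" and "finite K"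
    and "i \<in> R" "k \<in> K" "M i k \<noteq> 0" "\<forall>j\<in>K. j \<noteq> k \<longrightarrow> M i j = 0" "i' \<in> R"
  shows "C k i' = (if i = i' then 1 / M i k else 0)"
proof -
  have "M i k * C k i' = (\<Sum>j\<in>K. M i j * C j i')"
    using assms(2,4,6) by (subst sum.remove[of K k]) auto
  also have "\<dots> = (if i = i' then 1 else 0)"
    using assms(1,3,7) unfolding is_inverse_on_def by blast
  finally show ?thesis
    using assms(5) by (cases "i = i'") (simp_all add: field_simps)
qed

lemma inverse_on_mult_of_unit_row:
  assumes "is_inverse_on R K M C" and "finite R" "finite K"
    and "i \<in> R" "k \<in> K" "M i k \<noteq> 0" "\<forall>j\<in>K. j \<noteq> k \<longrightarrow> M i j = 0"
  shows "(\<Sum>i'\<in>R. C k i' * A i' l) = A i l / M i k"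
  using assms inverse_on_row_of_unit_row[OF assms(1,3-7)]
  by (subst sum.remove[of R i]) auto

lemma irreducible_on_if_offdiagonal_pos:
  assumes "\<forall>k\<in>K. \<forall>l\<in>K. k \<noteq> l \<longrightarrow> 0 < M k l"
  shows "irreducible_on K M"
  unfolding irreducible_on_def
proof (intro ballI)
  fix k l assume "k \<in> K" "l \<in> K"
  then show "(k, l) \<in> {(p, q). p \<in> K \<and> q \<in> K \<and> 0 < M p q}\<^sup>*"
    using assms by (cases "k = l") (auto intro: r_into_rtrancl)
qed

theorem proposition6p4:
  fixes m n :: nat and A B :: "nat \<Rightarrow> nat \<Rightarrow> real"
  assumes "WN_pair m n A B"
    and "\<forall>i\<in>{1..m}. \<forall>j\<in>{1..n}. B i j = 0 \<longrightarrow> 0 < A i j"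
  shows "S_irreducible m n A B"
  unfolding S_irreducible_def
proof (intro allI impI irreducible_on_if_offdiagonal_pos ballI)
  fix K C k l
  assume K: "K \<subseteq> {1..n} \<and> card K = m \<and> monomial_on {1..m} K B"
    and C: "is_inverse_on {1..m} K B C" and "k \<in> K" "l \<in> K" "k \<noteq> l"
  have nonneg: "\<forall>i\<in>{1..m}. \<forall>j\<in>K. 0 \<le> B i j"
    using assms(1) K unfolding WN_pair_def nonneg_mat_def by blast
  obtain i where i: "i \<in> {1..m}" "0 < B i k"
    using K \<open>k \<in> K\<close> unfolding monomial_on_def by blast
  have row_zero: "\<forall>j\<in>K. j \<noteq> k \<longrightarrow> B i j = 0"
    using monomial_on_row_zero_elsewhere K nonneg i \<open>k \<in> K\<close> by blast
  have "l \<in> {1..n}" "B i l = 0"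
    using K row_zero \<open>l \<in> K\<close> \<open>k \<noteq> l\<close> by auto
  then have "0 < A i l"
    using assms(2) i(1) by blast
  moreover have "(\<Sum>i'\<in>{1..m}. C k i' * A i' l) = A i l / B i k"
    using inverse_on_mult_of_unit_row[OF C _ _ i(1) \<open>k \<in> K\<close> _ row_zero] i(2) K finite_subset
    by fastforce
  ultimately show "0 < (\<Sum>i'\<in>{1..m}. C k i' * A i' l)"
    using i(2) by simp
qed

end
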